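(* Let $V=\mathbf R^{p,q}$ be a pseudo-Euclidean vector space with inner product $\langle\cdot,\cdot\rangle$, and let $T$ be a $(3,1)$-tensor on $V$ (a trilinear map $V^3\to V$) having the same symmetries as a $(3,1)$-curvature tensor. Let $V_1,V_2\subset V$ be subspaces such that $V_1\cap V_2$ is non-degenerate and $V=V_1+V_2$. If $T(V_i,V_i,V_i)=0$ for $i=1,2$ and the image of $T$ is contained in $V_1\cap V_2$, then $T=0$.
   Context: "The same symmetries as a $(3,1)$-curvature tensor" means: $T(u,v)w=-T(v,u)w$, the first Bianchi identity $T(u,v)w+T(v,w)u+T(w,u)v=0$, and $\langle T(u,v)w,z\rangle=-\langle T(u,v)z,w\rangle$ (hence also pair symmetry $\langle T(u,v)w,z\rangle=\langle T(w,z)u,v\rangle$), writing $T(u,v,w)=T(u,v)w$. *)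

theory Defs
  imports "HOL-Analysis.Analysis"
begin

text \<open>Pseudo-Euclidean space R^{p,q}: the coordinate space real^'n equipped with the
  diagonal inner product of signs eps i \<in> {1,-1}; p = number of +1 signs, q = number of -1 signs.\<close>

definition sign_vec :: "('n::finite \<Rightarrow> real) \<Rightarrow> bool" where
  "sign_vec eps \<longleftrightarrow> (\<forall>i. eps i = 1 \<or> eps i = -1)"

definition pinner :: "('n::finite \<Rightarrow> real) \<Rightarrow> real^'n \<Rightarrow> real^'n \<Rightarrow> real" where
  "pinner eps x y = (\<Sum>i\<in>UNIV. eps i * (x $ i) * (y $ i))"

definition trilinear :: "('a::real_vector \<Rightarrow> 'a \<Rightarrow> 'a \<Rightarrow> 'a) \<Rightarrow> bool" where
  "trilinear T \<longleftrightarrow> (\<forall>v w. linear (\<lambda>u. T u v w)) \<and> (\<forall>u w. linear (\<lambda>v. T u v w))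
                     \<and> (\<forall>u v. linear (\<lambda>w. T u v w))"

definition curvature_like :: "('n::finite \<Rightarrow> real) \<Rightarrow> (real^'n \<Rightarrow> real^'n \<Rightarrow> real^'n \<Rightarrow> real^'n) \<Rightarrow> bool" where
  "curvature_like eps T \<longleftrightarrow>
     (\<forall>u v w. T u v w = - T v u w) \<and>
     (\<forall>u v w. T u v w + T v w u + T w u v = 0) \<and>
     (\<forall>u v w z. pinner eps (T u v w) z = - pinner eps (T u v z) w)"

definition nondegenerate :: "('n::finite \<Rightarrow> real) \<Rightarrow> (real^'n) set \<Rightarrow> bool" where
  "nondegenerate eps W \<longleftrightarrow> (\<forall>x\<in>W. (\<forall>y\<in>W. pinner eps x y = 0) \<longrightarrow> x = 0)"

end

theory Submission
  imports Defs
begin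

text \<open>Expanding \<open>u = u\<^sub>1 + u\<^sub>2\<close>, \<open>v = v\<^sub>1 + v\<^sub>2\<close>, \<open>w = w\<^sub>1 + w\<^sub>2\<close> along \<open>V = V\<^sub>1 + V\<^sub>2\<close>
  writes \<open>\<langle>T(u,v)w, y\<rangle>\<close> as a sum of eight terms \<open>\<langle>T(a,b)c, y\<rangle>\<close>. For \<open>y \<in> V\<^sub>1 \<inter> V\<^sub>2\<close>, two of
  \<open>a, b, c\<close> lie in the same \<open>V\<^sub>i\<close>, so three of the four arguments do; using the skew symmetries
  and pair symmetry these three can be moved into the slots of \<open>T\<close>, where \<open>T\<close> vanishes.
  Hence \<open>T(u,v)w \<in> V\<^sub>1 \<inter> V\<^sub>2\<close> is orthogonal to \<open>V\<^sub>1 \<inter> V\<^sub>2\<close>, and non-degeneracy gives \<open>T = 0\<close>.\<close>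

lemma pair_symmetry:
  fixes R :: "'a \<Rightarrow> 'a \<Rightarrow> 'a \<Rightarrow> 'a \<Rightarrow> 'b::linordered_field"
  assumes skew12: "\<And>x y z w. R x y z w = - R y x z w"
    and skew34: "\<And>x y z w. R x y z w = - R x y w z"
    and bianchi: "\<And>x y z w. R x y z w + R y z x w + R z x y w = 0"
  shows "R x y z w = R z w x y"
  \<comment> \<open>The classical octahedron argument: add the four cyclic Bianchi identities and rewrite
    every term into a normal form with the skew symmetries.\<close>
  using bianchi[of x y z w] bianchi[of y z w x] bianchi[of z w x y] bianchi[of w x y z]
    skew12[of x y z w] skew34[of x y z w] skew34[of y x z w] skew12[of y z x w] skew34[of y z x w]
    skew34[of z y x w] skew12[of z x y w] skew34[of z x y w] skew34[of x z y w] skew12[of y z w x]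
    skew34[of y z w x] skew34[of z y w x] skew12[of z w y x] skew34[of z w y x] skew34[of w z y x]
    skew12[of w y z x] skew34[of w y z x] skew34[of y w z x] skew12[of z w x y] skew34[of z w x y]
    skew34[of w z x y] skew12[of w x z y] skew34[of w x z y] skew34[of x w z y] skew12[of x z w y]
    skew34[of x z w y] skew34[of z x w y] skew12[of w x y z] skew34[of w x y z] skew34[of x w y z]
    skew12[of x y w z] skew34[of x y w z] skew34[of y x w z] skew12[of y w x z] skew34[of y w x z]
    skew34[of w y x z]
  by linarith

lemma linear_pinner_left: "linear (\<lambda>x. pinner eps x y)"
  by (rule linearI) (simp_all add: pinner_def sum.distrib sum_distrib_left algebra_simps)

lemma curvature_like_pair_symmetry:
  assumes "curvature_like eps T"
  shows "pinner eps (T u v w) z = pinner eps (T w z u) v"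
proof (rule pair_symmetry[where R = "\<lambda>u v w z. pinner eps (T u v w) z"])
  show "pinner eps (T x y z) w = - pinner eps (T y x z) w" for x y z w
    using assms linear_neg[OF linear_pinner_left] unfolding curvature_like_def by metis
  show "pinner eps (T x y z) w = - pinner eps (T x y w) z" for x y z w
    using assms unfolding curvature_like_def by blast
  show "pinner eps (T x y z) w + pinner eps (T y z x) w + pinner eps (T z x y) w = 0" for x y z w
    using assms linear_add[OF linear_pinner_left] linear_0[OF linear_pinner_left]
    unfolding curvature_like_def by metis
qed

lemma curvature_like_pinner_eq_0_if_three_in:
  assumes T: "curvature_like eps T"
    and vanish: "\<forall>u\<in>S. \<forall>v\<in>S. \<forall>w\<in>S. T u v w = 0"
    and "y \<in> S"
    and "(a \<in> S \<and> b \<in> S) \<or> (a \<in> S \<and> c \<in> S) \<or> (b \<in> S \<and> c \<in> S)"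
  shows "pinner eps (T a b c) y = 0"
proof -
  have skew34: "pinner eps (T a b c) y = - pinner eps (T a b y) c"
    using T unfolding curvature_like_def by blast
  have skew12: "T a b c = - T b a c"
    using T unfolding curvature_like_def by blast
  have zero: "pinner eps 0 z = 0" for z
    using linear_0[OF linear_pinner_left] .
  from assms(4) show ?thesis
  proof (elim disjE conjE)
    assume "a \<in> S" "b \<in> S"
    with skew34 vanish \<open>y \<in> S\<close> zero show ?thesis by simp
  next
    assume "a \<in> S" "c \<in> S"
    with curvature_like_pair_symmetry[OF T, of a b c y] vanish \<open>y \<in> S\<close> zero show ?thesis
      by simp
  next
    assume "b \<in> S" "c \<in> S"
    have "pinner eps (T b a c) y = 0"
      using curvature_like_pair_symmetry[OF T, of b a c y] vanish \<open>y \<in> S\<close> \<open>b \<in> S\<close> \<open>c \<in> S\<close>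
        zero by simp
    then show ?thesis
      unfolding skew12 linear_neg[OF linear_pinner_left] by simp
  qed
qed

lemma trilinear_eq_0_if_eq_0_on_summands:
  fixes T :: "'a::real_vector \<Rightarrow> 'a \<Rightarrow> 'a \<Rightarrow> 'a" and f :: "'a \<Rightarrow> 'b::real_vector"
  assumes "trilinear T" and "linear f" and "A + B = UNIV"
    and vanish: "\<And>a b c. a \<in> A \<union> B \<Longrightarrow> b \<in> A \<union> B \<Longrightarrow> c \<in> A \<union> B \<Longrightarrow> f (T a b c) = 0"
  shows "f (T u v w) = 0"
proof -
  have "\<exists>x1\<in>A. \<exists>x2\<in>B. x = x1 + x2" for x
    using \<open>A + B = UNIV\<close> by (metis UNIV_I set_plus_elim)
  then obtain u1 u2 v1 v2 w1 w2 where
    parts: "u1 \<in> A" "u2 \<in> B" "v1 \<in> A" "v2 \<in> B" "w1 \<in> A" "w2 \<in> B"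
    and sums: "u = u1 + u2" "v = v1 + v2" "w = w1 + w2"
    by meson
  have add1: "T (x + y) b c = T x b c + T y b c"
    and add2: "T a (x + y) c = T a x c + T a y c"
    and add3: "T a b (x + y) = T a b x + T a b y" for a b c x y
    using \<open>trilinear T\<close> linear_add[of "\<lambda>x. T x b c"] linear_add[of "\<lambda>x. T a x c"]
      linear_add[of "T a b"]
    unfolding trilinear_def by simp_all
  show ?thesis
    unfolding sums add1 add2 add3 linear_add[OF \<open>linear f\<close>]
    using parts vanish by simp
qed

theorem lemma4p4:
  fixes eps :: "'n::finite \<Rightarrow> real"
    and T :: "real^'n \<Rightarrow> real^'n \<Rightarrow> real^'n \<Rightarrow> real^'n"
    and V1 V2 :: "(real^'n) set"
  assumes "sign_vec eps"
    and "trilinear T"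
    and "curvature_like eps T"
    and "subspace V1" and "subspace V2"
    and "nondegenerate eps (V1 \<inter> V2)"
    and "V1 + V2 = UNIV"
    and "\<forall>u\<in>V1. \<forall>v\<in>V1. \<forall>w\<in>V1. T u v w = 0"
    and "\<forall>u\<in>V2. \<forall>v\<in>V2. \<forall>w\<in>V2. T u v w = 0"
    and "\<forall>u v w. T u v w \<in> V1 \<inter> V2"
  shows "\<forall>u v w. T u v w = 0"
proof (intro allI)
  fix u v w
  have "pinner eps (T u v w) y = 0" if y: "y \<in> V1 \<inter> V2" for y
  proof (rule trilinear_eq_0_if_eq_0_on_summands[OF assms(2) linear_pinner_left assms(7)])
    fix a b c
    assume "a \<in> V1 \<union> V2" "b \<in> V1 \<union> V2" "c \<in> V1 \<union> V2"
    then consider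
        "(a \<in> V1 \<and> b \<in> V1) \<or> (a \<in> V1 \<and> c \<in> V1) \<or> (b \<in> V1 \<and> c \<in> V1)"
      | "(a \<in> V2 \<and> b \<in> V2) \<or> (a \<in> V2 \<and> c \<in> V2) \<or> (b \<in> V2 \<and> c \<in> V2)"
      by blast
    then show "pinner eps (T a b c) y = 0"
      using curvature_like_pinner_eq_0_if_three_in[OF assms(3) assms(8)]
        curvature_like_pinner_eq_0_if_three_in[OF assms(3) assms(9)] y
      by cases blast+
  qed
  with assms(6,10) show "T u v w = 0"
    unfolding nondegenerate_def by blast
qed

end
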